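(* Let $\tau_1(x)=\frac{x+1}{x+3}$ and $\tau_2(x)=\frac{2}{4-x}$ on $[0,1]$. For $t>0$ let $A_1(y)=\frac12\left(\log\frac{2}{(y-1)^2}+\log 2\right)$ (used on $\tau_1([0,1])=[1/3,1/2]$) and $A_2(y,t)=\frac12\left(\log\frac{2}{y^2}+\log(2t^2)\right)$ (used on $\tau_2([0,1])=[1/2,2/3]$). Let $V_1(x,t)=\log\left(t\left(2+\sqrt2-\frac{x}{\sqrt2}\right)\right)$, $V_2(x,t)=\log(x+1+\sqrt2)$ and $V(x,t)=\max\{V_1(x,t),V_2(x,t)\}$. If $0<t\le t_1:=\frac{4(4+3\sqrt2)}{18+13\sqrt2}$, then for every $x\in[1/3,2/3]$, $$V(x,t)+\log(2+\sqrt2)=\max\{A_1(\tau_1(x))+V(\tau_1(x),t),\,A_2(\tau_2(x),t)+V(\tau_2(x),t)\},$$ so $V(\cdot,t)$ is a calibrated subaction with maximal value $m(A,t)=\log(2+\sqrt2)$.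
   Context: This potential is associated with the pair of matrices $\begin{pmatrix}2&1\\2&2\end{pmatrix}$ and $t\begin{pmatrix}2&2\\1&2\end{pmatrix}$, whose projective actions on $[0,1]$ are $\tau_1,\tau_2$. *)

theory Defs
  imports Complex_Main
begin

definition tau1 :: "real \<Rightarrow> real" where
  "tau1 x = (x + 1) / (x + 3)"

definition tau2 :: "real \<Rightarrow> real" where
  "tau2 x = 2 / (4 - x)"

definition A1 :: "real \<Rightarrow> real" where
  "A1 y = (ln (2 / (y - 1)^2) + ln 2) / 2"

definition A2 :: "real \<Rightarrow> real \<Rightarrow> real" where
  "A2 y t = (ln (2 / y^2) + ln (2 * t^2)) / 2"

definition V1 :: "real \<Rightarrow> real \<Rightarrow> real" where
  "V1 x t = ln (t * (2 + sqrt 2 - x / sqrt 2))"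

definition V2 :: "real \<Rightarrow> real \<Rightarrow> real" where
  "V2 x t = ln (x + 1 + sqrt 2)"

definition V :: "real \<Rightarrow> real \<Rightarrow> real" where
  "V x t = max (V1 x t) (V2 x t)"

definition t1 :: real where
  "t1 = 4 * (4 + 3 * sqrt 2) / (18 + 13 * sqrt 2)"

end

theory Submission
  imports Defs
begin

(* Write V1 x t = ln (t * v1 x) and V2 x t = ln (v2 x) with affine v1, v2, so that
   V x t = ln (expV x t) where expV x t = max (t * v1 x) (v2 x).  Since
   A1 (tau1 x) = ln (x + 3) and A2 (tau2 x) t = ln (t * (4 - x)), the claim becomes the
   multiplicative identity
     (2 + sqrt 2) * expV x t = max ((x + 3) * expV (tau1 x) t) (t * (4 - x) * expV (tau2 x) t).
   The affine pieces satisfy (x + 3) * v2 (tau1 x) = (2 + sqrt 2) * v2 x and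
   (4 - x) * v2 (tau2 x) = (2 + sqrt 2) * v1 x, so the right-hand side contains both terms of
   the left-hand side.  The two remaining terms, t * (x + 3) * v1 (tau1 x) and
   t^2 * (4 - x) * v1 (tau2 x), are dominated by the left-hand side as long as t <= t1. *)

lemma sqrt2_gt_1: "1 < sqrt (2::real)"
  by simp

lemma sqrt2_mult_sqrt2_left: "sqrt 2 * (sqrt 2 * z) = 2 * (z::real)"
  by (simp flip: mult.assoc)

lemma divide_sqrt2: "z / sqrt 2 = z * sqrt 2 / (2::real)"
  by (simp add: field_simps)

definition v1 :: "real \<Rightarrow> real" where
  "v1 x = 2 + sqrt 2 - x / sqrt 2"

definition v2 :: "real \<Rightarrow> real" where
  "v2 x = x + 1 + sqrt 2"

definition expV :: "real \<Rightarrow> real \<Rightarrow> real" where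
  "expV x t = max (t * v1 x) (v2 x)"

lemma v1_pos:
  assumes "x < 2 + 2 * sqrt 2"
  shows "0 < v1 x"
proof -
  have "x * sqrt 2 < (2 + 2 * sqrt 2) * sqrt 2"
    using assms by (simp add: mult_strict_right_mono)
  then show ?thesis unfolding v1_def divide_sqrt2 by (simp add: algebra_simps)
qed

lemma v2_pos: "0 \<le> x \<Longrightarrow> 0 < v2 x"
  unfolding v2_def using sqrt2_gt_1 by linarith

lemma expV_pos: "0 \<le> x \<Longrightarrow> 0 < expV x t"
  unfolding expV_def using v2_pos by (simp add: less_max_iff_disj)

lemma ln_max: "0 < a \<Longrightarrow> 0 < b \<Longrightarrow> ln (max a b) = max (ln a) (ln (b::real))"
  using ln_le_cancel_iff[of a b] by (auto simp: max_def)

lemma V_eq_ln_expV: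
  assumes "0 < t" "x \<in> {0..1}"
  shows "V x t = ln (expV x t)"
proof -
  from assms(2) have "0 \<le> x" "x \<le> 1" by auto
  have "0 < v1 x"
    by (rule v1_pos) (use \<open>x \<le> 1\<close> sqrt2_gt_1 in linarith)
  then have "0 < t * v1 x" "0 < v2 x"
    using assms(1) \<open>0 \<le> x\<close> by (simp_all add: v2_pos)
  then show ?thesis unfolding V_def V1_def V2_def expV_def v1_def[symmetric] v2_def[symmetric]
    by (simp add: ln_max)
qed

lemma A1_tau1:
  assumes "-3 < x"
  shows "A1 (tau1 x) = ln (x + 3)"
proof -
  have "2 / (tau1 x - 1)^2 = (x + 3)^2 / 2"
    using assms by (simp add: tau1_def field_simps power2_eq_square)
  then have "A1 (tau1 x) = (ln ((x + 3)^2 / 2) + ln 2) / 2"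
    by (simp only: A1_def)
  also have "ln ((x + 3)^2 / 2) = 2 * ln (x + 3) - ln 2"
    using assms by (simp add: ln_div ln_realpow)
  finally show ?thesis by simp
qed

lemma A2_tau2:
  assumes "x < 4" "0 < t"
  shows "A2 (tau2 x) t = ln (t * (4 - x))"
proof -
  have "2 / (tau2 x)^2 = (4 - x)^2 / 2"
    using assms by (simp add: tau2_def field_simps power2_eq_square)
  then have "A2 (tau2 x) t = (ln ((4 - x)^2 / 2) + ln (2 * t^2)) / 2"
    by (simp only: A2_def)
  also have "ln ((4 - x)^2 / 2) + ln (2 * t^2) = 2 * ln (t * (4 - x))"
    using assms by (simp add: ln_div ln_mult ln_realpow)
  finally show ?thesis by simp
qed

lemma tau1_in_unit: "x \<in> {0..1} \<Longrightarrow> tau1 x \<in> {0..1}"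
  by (simp add: tau1_def)

lemma tau2_in_unit: "x \<in> {0..1} \<Longrightarrow> tau2 x \<in> {0..1}"
  by (simp add: tau2_def)

lemma v1_eq: "(2 + sqrt 2) * v1 x = 6 + 4 * sqrt 2 - (1 + sqrt 2) * x"
  unfolding v1_def divide_sqrt2 by (simp add: algebra_simps)

lemma tau1_v1_eq: "-3 < x \<Longrightarrow> (x + 3) * v1 (tau1 x) = (2 + sqrt 2) * (x + 3) - (x + 1) * sqrt 2 / 2"
  unfolding v1_def tau1_def divide_sqrt2 by (simp add: field_simps)

lemma tau2_v1_eq: "x < 4 \<Longrightarrow> (4 - x) * v1 (tau2 x) = (2 + sqrt 2) * (4 - x) - sqrt 2"
  unfolding v1_def tau2_def divide_sqrt2 by (simp add: field_simps)

lemma tau1_v2_eq: "-3 < x \<Longrightarrow> (x + 3) * v2 (tau1 x) = (2 + sqrt 2) * v2 x"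
  unfolding v2_def tau1_def by (simp add: field_simps)

lemma tau2_v2_eq: "x < 4 \<Longrightarrow> (4 - x) * v2 (tau2 x) = (2 + sqrt 2) * v1 x"
  unfolding v1_eq unfolding v2_def tau2_def by (simp add: field_simps)

lemma t1_mult_le_iff: "t1 * a \<le> b \<longleftrightarrow> 4 * (4 + 3 * sqrt 2) * a \<le> (18 + 13 * sqrt 2) * b"
proof -
  have "0 < 18 + 13 * sqrt (2::real)" by (simp add: add_pos_nonneg)
  then show ?thesis unfolding t1_def by (simp add: divide_le_eq algebra_simps)
qed

lemma tau1_v1_le:
  assumes "-3 < x" "x \<le> sqrt 2 - 1"
  shows "(x + 3) * v1 (tau1 x) \<le> (2 + sqrt 2) * v1 x"
proof -
  have "(2 + sqrt 2) * v1 x - (x + 3) * v1 (tau1 x) = 3 / 2 * ((2 + sqrt 2) * (sqrt 2 - 1 - x))"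
    unfolding v1_eq tau1_v1_eq[OF assms(1)] by (simp add: algebra_simps sqrt2_mult_sqrt2_left)
  moreover have "0 \<le> (2 + sqrt 2) * (sqrt 2 - 1 - x)" using assms(2) by simp
  ultimately show ?thesis by linarith
qed

(* Both this bound and tau1_v1_le are equalities at x = sqrt 2 - 1; this determines t1. *)
lemma t1_tau1_v1_le:
  assumes "sqrt 2 - 1 \<le> x"
  shows "t1 * ((x + 3) * v1 (tau1 x)) \<le> (2 + sqrt 2) * v2 x"
proof -
  have "-3 < x" using assms sqrt2_gt_1 by linarith
  have "4 * (4 + 3 * sqrt 2) * ((x + 3) * v1 (tau1 x)) - (18 + 13 * sqrt 2) * ((2 + sqrt 2) * v2 x)
      = (18 + 12 * sqrt 2) * (sqrt 2 - 1 - x)"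
    unfolding tau1_v1_eq[OF \<open>-3 < x\<close>] v2_def
    by (simp add: algebra_simps sqrt2_mult_sqrt2_left) (simp add: field_simps)
  moreover have "(18 + 12 * sqrt 2) * (sqrt 2 - 1 - x) \<le> 0"
    using assms by (simp add: mult_nonneg_nonpos)
  ultimately show ?thesis unfolding t1_mult_le_iff by linarith
qed

lemma t1_tau2_v1_le:
  assumes "0 \<le> x" "x < 4"
  shows "t1 * ((4 - x) * v1 (tau2 x)) \<le> (2 + sqrt 2) * v1 x"
proof -
  have "4 * (4 + 3 * sqrt 2) * ((4 - x) * v1 (tau2 x)) - (18 + 13 * sqrt 2) * ((2 + sqrt 2) * v1 x)
      = - 12 - 6 * sqrt 2 - (12 + 9 * sqrt 2) * x"
    unfolding tau2_v1_eq[OF assms(2)] v1_eq by (simp add: algebra_simps sqrt2_mult_sqrt2_left)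
  moreover have "0 \<le> (12 + 9 * sqrt 2) * x"
    using assms by simp
  ultimately show ?thesis unfolding t1_mult_le_iff using sqrt2_gt_1 by linarith
qed

lemma expV_tau1:
  assumes "-3 < x"
  shows "(x + 3) * expV (tau1 x) t = max (t * ((x + 3) * v1 (tau1 x))) ((2 + sqrt 2) * v2 x)"
proof -
  have "(x + 3) * expV (tau1 x) t = max (t * ((x + 3) * v1 (tau1 x))) ((x + 3) * v2 (tau1 x))"
    unfolding expV_def using assms by (simp add: max_mult_distrib_left mult.left_commute)
  then show ?thesis using assms by (simp add: tau1_v2_eq)
qed

lemma expV_tau2:
  assumes "x < 4" "0 \<le> t"
  shows "t * (4 - x) * expV (tau2 x) t =
    max (t * (t * ((4 - x) * v1 (tau2 x)))) (t * ((2 + sqrt 2) * v1 x))"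
proof -
  have "t * (4 - x) * expV (tau2 x) t =
      max (t * (t * ((4 - x) * v1 (tau2 x)))) (t * ((4 - x) * v2 (tau2 x)))"
    unfolding expV_def using assms by (simp add: max_mult_distrib_left mult_ac)
  then show ?thesis using assms by (simp add: tau2_v2_eq)
qed

lemma expV_scaled:
  "(2 + sqrt 2) * expV x t = max (t * ((2 + sqrt 2) * v1 x)) ((2 + sqrt 2) * v2 x)"
  unfolding expV_def by (simp add: max_mult_distrib_left mult.left_commute add_nonneg_nonneg)

lemma t_tau1_v1_le_expV:
  assumes "0 \<le> t" "t \<le> t1" "x \<in> {0..1}"
  shows "t * ((x + 3) * v1 (tau1 x)) \<le> (2 + sqrt 2) * expV x t"
proof (cases "x \<le> sqrt 2 - 1")
  case True
  with assms have "t * ((x + 3) * v1 (tau1 x)) \<le> t * ((2 + sqrt 2) * v1 x)"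
    by (simp add: mult_left_mono tau1_v1_le)
  then show ?thesis unfolding expV_scaled by simp
next
  case False
  have "tau1 x \<le> 1" using tau1_in_unit[OF assms(3)] by simp
  then have "0 < v1 (tau1 x)" using sqrt2_gt_1 by (intro v1_pos) linarith
  then have "t * ((x + 3) * v1 (tau1 x)) \<le> t1 * ((x + 3) * v1 (tau1 x))"
    using assms by (intro mult_right_mono) auto
  also have "\<dots> \<le> (2 + sqrt 2) * v2 x"
    using False by (intro t1_tau1_v1_le) simp
  finally show ?thesis unfolding expV_scaled by simp
qed

lemma t_tau2_v1_le:
  assumes "0 \<le> t" "t \<le> t1" "x \<in> {0..1}"
  shows "t * ((4 - x) * v1 (tau2 x)) \<le> (2 + sqrt 2) * v1 x"
proof -
  have "tau2 x \<le> 1" using tau2_in_unit[OF assms(3)] by simp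
  then have "0 < v1 (tau2 x)" using sqrt2_gt_1 by (intro v1_pos) linarith
  then have "t * ((4 - x) * v1 (tau2 x)) \<le> t1 * ((4 - x) * v1 (tau2 x))"
    using assms by (intro mult_right_mono) auto
  also have "\<dots> \<le> (2 + sqrt 2) * v1 x"
    using assms(3) by (intro t1_tau2_v1_le) auto
  finally show ?thesis .
qed

lemma expV_calibrated:
  assumes "0 \<le> t" "t \<le> t1" "x \<in> {0..1}"
  shows "(2 + sqrt 2) * expV x t = max ((x + 3) * expV (tau1 x) t) (t * (4 - x) * expV (tau2 x) t)"
proof -
  have absorb: "max a b = max (max e1 b) (max e2 a)" if "e1 \<le> max a b" "e2 \<le> a"
    for a b e1 e2 :: real
    using that by (auto simp: max_def)
  have "-3 < x" "x < 4" using assms(3) by auto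
  have "t * (t * ((4 - x) * v1 (tau2 x))) \<le> t * ((2 + sqrt 2) * v1 x)"
    using assms by (intro mult_left_mono t_tau2_v1_le)
  with t_tau1_v1_le_expV[OF assms] show ?thesis
    unfolding expV_tau1[OF \<open>-3 < x\<close>] expV_tau2[OF \<open>x < 4\<close> assms(1)] expV_scaled
    by (rule absorb)
qed

theorem mainTheorem4:
  fixes t :: real
  assumes "0 < t" and "t \<le> t1"
  shows "\<forall>x \<in> {1/3..2/3}.
           V x t + ln (2 + sqrt 2) =
           max (A1 (tau1 x) + V (tau1 x) t) (A2 (tau2 x) t + V (tau2 x) t)"
proof
  fix x :: real
  assume "x \<in> {1/3..2/3}"
  then have x: "x \<in> {0..1}" by auto
  then have tau_x: "tau1 x \<in> {0..1}" "tau2 x \<in> {0..1}"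
    by (rule tau1_in_unit, rule tau2_in_unit)
  from x have "-3 < x" "x < 4" by auto
  have "V x t + ln (2 + sqrt 2) = ln ((2 + sqrt 2) * expV x t)"
    using x assms(1) by (simp add: V_eq_ln_expV ln_mult_pos expV_pos add_pos_nonneg)
  also have "\<dots> = ln (max ((x + 3) * expV (tau1 x) t) (t * (4 - x) * expV (tau2 x) t))"
    using assms x by (simp add: expV_calibrated)
  also have "\<dots> = max (ln (x + 3) + ln (expV (tau1 x) t)) (ln (t * (4 - x)) + ln (expV (tau2 x) t))"
    using tau_x \<open>-3 < x\<close> \<open>x < 4\<close> assms(1) by (simp add: ln_max ln_mult_pos expV_pos)
  also have "\<dots> = max (A1 (tau1 x) + V (tau1 x) t) (A2 (tau2 x) t + V (tau2 x) t)"
    using tau_x \<open>-3 < x\<close> \<open>x < 4\<close> assms(1) by (simp add: A1_tau1 A2_tau2 V_eq_ln_expV)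
  finally show "V x t + ln (2 + sqrt 2) = max (A1 (tau1 x) + V (tau1 x) t) (A2 (tau2 x) t + V (tau2 x) t)" .
qed

end
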